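(* Let $G$ be a finite abelian group and let $\rho\ge2$ be an integer. Then $$t_\rho(G)\le\left\lfloor\frac{|G|-2}{\rho-1}\right\rfloor+1.$$
   Context: Groups are written additively. For $A\subseteq G$ let $A_0:=A\cup\{0\}$ and $\langle A\rangle^+_\rho:=\rho A_0=\{a_1+\dots+a_\rho:a_i\in A_0\}$. $\operatorname{diam}^+_A(G):=\min\{\rho\in\mathbb{N}_0:\langle A\rangle^+_\rho=G\}$ ($\min\varnothing=\infty$). The period of $S\subseteq G$ is $\pi(S):=\{g\in G:S+g=S\}$; $S$ is aperiodic if $\pi(S)=\{0\}$. A subset $A\subseteq G$ is $\rho$-maximal if it is maximal under inclusion subject to $\operatorname{diam}^+_A(G)\ge\rho$, i.e. subject to $\langle A\rangle^+_{\rho-1}\neq G$. With the convention $\max\varnothing=0$: $t_\rho(G):=\max\{|A|: A \text{ is an aperiodic } \rho\text{-maximal generating set for } G\}$. *)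

theory Defs
  imports Complex_Main
begin

text \<open>Finite abelian groups are modelled as finite types of class ab_group_add;
the group G is UNIV.\<close>

definition zero_ext :: "'a::ab_group_add set \<Rightarrow> 'a set" where
  "zero_ext A = insert 0 A"

fun sumset :: "nat \<Rightarrow> 'a::ab_group_add set \<Rightarrow> 'a set" where
  "sumset 0 A = {0}"
| "sumset (Suc r) A = {a + b | a b. a \<in> zero_ext A \<and> b \<in> sumset r A}"

definition period :: "'a::ab_group_add set \<Rightarrow> 'a set" where
  "period S = {g. (\<lambda>x. x + g) ` S = S}"

definition aperiodic :: "'a::ab_group_add set \<Rightarrow> bool" where
  "aperiodic S \<longleftrightarrow> period S = {0}"

definition gen_subgroup :: "'a::ab_group_add set \<Rightarrow> 'a set" where
  "gen_subgroup A = \<Inter>{H. A \<subseteq> H \<and> 0 \<in> H \<and> (\<forall>x\<in>H. \<forall>y\<in>H. x + y \<in> H) \<and> (\<forall>x\<in>H. - x \<in> H)}"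

definition generating :: "'a::ab_group_add set \<Rightarrow> bool" where
  "generating A \<longleftrightarrow> gen_subgroup A = UNIV"

definition rho_maximal :: "nat \<Rightarrow> 'a::ab_group_add set \<Rightarrow> bool" where
  "rho_maximal \<rho> A \<longleftrightarrow> sumset (\<rho> - 1) A \<noteq> UNIV \<and>
     (\<forall>B. A \<subset> B \<longrightarrow> sumset (\<rho> - 1) B = UNIV)"

text \<open>t_rho(G), with max of the empty set = 0; G = UNIV of the finite type.\<close>
definition t_rho :: "nat \<Rightarrow> 'a::{ab_group_add,finite} itself \<Rightarrow> nat" where
  "t_rho \<rho> _ = Max (insert 0 (card ` {A :: 'a set. aperiodic A \<and> rho_maximal \<rho> A \<and> generating A}))"

end

theory Submission
  imports Defs "HOL-Library.Set_Algebras"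
begin

(* Let A be an aperiodic rho-maximal set, k = rho - 1, so that kA \<noteq> G.
   (1) Maximality forces 0 \<in> A, hence jA = A + (j-1)A, and it forces kA to be aperiodic:
       a period g of kA could be added to A (replacing A by A \<union> (g + A)) without
       filling G, so g + A = A, i.e. g = 0.  Periods of jA grow with j, so every jA with
       j \<le> k is aperiodic.
   (2) The weak form of Kneser's theorem, |X| + |Y| \<le> |X + Y| + |period (X + Y)|, then
       gives |jA| \<ge> j(|A| - 1) + 1 for j \<le> k.
   (3) For t \<notin> kA the sets A and t - (k-1)A are disjoint, so |A| + |(k-1)A| \<le> |G|,
       which rearranges to (rho - 1)(|A| - 1) + 2 \<le> |G| and yields the floor bound.  Sumsets X + Y and translates g +o X are the pointwise set operations
   of HOL-Library.Set_Algebras. *)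

text \<open>Translates g +o S, written as images; the period is defined through the latter.\<close>
lemma elt_set_plus_image: "c +o S = (\<lambda>x. x + c) ` (S :: 'a::ab_semigroup_add set)"
  by (auto simp: elt_set_plus_def add.commute)

lemma card_translate: "card (c +o S) = card (S :: 'a::ab_group_add set)"
proof -
  have "c +o S = (+) c ` S" by (auto simp: elt_set_plus_def)
  then show ?thesis by (simp add: card_image)
qed

lemma card_le_if_translate_subset:
  fixes S T :: "'a::ab_group_add set"
  assumes "c +o S \<subseteq> T" "finite T"
  shows "card S \<le> card T"
  using card_mono[OF assms(2,1)] by (simp add: card_translate)

lemma in_period_iff: "g \<in> period S \<longleftrightarrow> (\<forall>x. x + g \<in> S \<longleftrightarrow> x \<in> S)"
proof
  assume "g \<in> period S"
  then have S: "(\<lambda>x. x + g) ` S = S" by (simp add: period_def)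
  show "\<forall>x. x + g \<in> S \<longleftrightarrow> x \<in> S"
  proof
    fix x
    have "x + g \<in> (\<lambda>x. x + g) ` S \<longleftrightarrow> x \<in> S" by auto
    then show "x + g \<in> S \<longleftrightarrow> x \<in> S" by (simp only: S)
  qed
next
  assume stable: "\<forall>x. x + g \<in> S \<longleftrightarrow> x \<in> S"
  have "(\<lambda>x. x + g) ` S = S"
  proof (intro equalityI subsetI)
    fix x assume "x \<in> S"
    then have "x - g \<in> S" using stable[rule_format, of "x - g"] by simp
    then show "x \<in> (\<lambda>x. x + g) ` S" by (auto intro: image_eqI[where x = "x - g"])
  qed (use stable in auto)
  then show "g \<in> period S" by (simp add: period_def)
qed

lemma period_memD: "g \<in> period S \<Longrightarrow> x + g \<in> S \<longleftrightarrow> x \<in> S"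
  by (simp add: in_period_iff)

lemma period_zero: "0 \<in> period S"
  by (simp add: in_period_iff)

lemma period_add: "g \<in> period S \<Longrightarrow> h \<in> period S \<Longrightarrow> g + h \<in> period S"
  by (simp add: in_period_iff add.assoc[symmetric])

lemma period_uminus:
  assumes g: "g \<in> period S"
  shows "- g \<in> period S"
  unfolding in_period_iff
proof
  fix x
  show "x + - g \<in> S \<longleftrightarrow> x \<in> S"
    using period_memD[OF g, of "x - g"] by simp
qed

lemma period_Int_subset_period_Un: "period C1 \<inter> period C2 \<subseteq> period (C1 \<union> C2)"
  by (auto simp: in_period_iff)

lemma period_subset_period_plus: "period B \<subseteq> period (A + B :: 'a::ab_group_add set)"
proof
  fix g assume g: "g \<in> period B"
  have "x + g \<in> A + B" if "x \<in> A + B" for x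
  proof -
    from that obtain a b where "x = a + b" "a \<in> A" "b \<in> B" by (rule set_plus_elim)
    moreover have "b + g \<in> B" using period_memD[OF g, of b] \<open>b \<in> B\<close> by simp
    moreover have "x + g = a + (b + g)" using \<open>x = a + b\<close> by (simp add: add.assoc)
    ultimately show ?thesis by (metis set_plus_intro)
  qed
  moreover have "x \<in> A + B" if "x + g \<in> A + B" for x
  proof -
    from that obtain a b where "x + g = a + b" "a \<in> A" "b \<in> B" by (rule set_plus_elim)
    moreover have "b - g \<in> B" using period_memD[OF g, of "b - g"] \<open>b \<in> B\<close> by simp
    moreover have "x = a + (b - g)" using \<open>x + g = a + b\<close> by (simp add: algebra_simps)
    ultimately show ?thesis by (metis set_plus_intro)
  qed
  ultimately show "g \<in> period (A + B)" unfolding in_period_iff by blast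
qed

lemma plus_period_subset: "S + period S \<subseteq> (S :: 'a::ab_group_add set)"
proof
  fix z assume "z \<in> S + period S"
  then obtain s p where "z = s + p" "s \<in> S" "p \<in> period S" by (rule set_plus_elim)
  then show "z \<in> S" using period_memD by blast
qed

lemma period_if_translate_subset:
  fixes A :: "'a::{ab_group_add,finite} set"
  assumes "g +o A \<subseteq> A"
  shows "g \<in> period A"
proof -
  have "g +o A = A" using assms by (rule card_subset_eq[OF finite]) (simp add: card_translate)
  then show ?thesis by (simp add: period_def elt_set_plus_image)
qed

section \<open>Periods of unions\<close>

lemma card_plus_card_le_Un:
  fixes S T M :: "'a::finite set"
  assumes "S \<inter> T \<subseteq> M"
  shows "card S + card T \<le> card (S \<union> T) + card M"
  using card_Un_Int[of S T] card_mono[OF _ assms] by simp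

lemma card_split_by_predicate:
  "finite K \<Longrightarrow> card K = card {k \<in> K. P k} + card {k \<in> K. \<not> P k}"
  by (subst card_Un_disjoint[symmetric]) (auto intro: arg_cong[where f = card])

lemma point_count:
  fixes C1 C2 :: "'a::{ab_group_add,finite} set"
  assumes "x \<in> C2" "x \<notin> C1"
  shows "card {k \<in> period C1. x + k \<in> C2} + card {k \<in> period C2. x + k \<notin> C1}
           \<le> card (C2 - C1) + card (period C1 \<inter> period C2)"
proof -
  let ?I1 = "{k \<in> period C1. x + k \<in> C2}" and ?I2 = "{k \<in> period C2. x + k \<notin> C1}"
  have "x +o (?I1 \<union> ?I2) \<subseteq> C2 - C1"
    using assms by (auto simp: elt_set_plus_def period_memD)
  then have "card (?I1 \<union> ?I2) \<le> card (C2 - C1)" by (rule card_le_if_translate_subset) simp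
  moreover have "card ?I1 + card ?I2 \<le> card (?I1 \<union> ?I2) + card (period C1 \<inter> period C2)"
    by (rule card_plus_card_le_Un) auto
  ultimately show ?thesis by linarith
qed

lemma card_count_shift:
  fixes C X :: "'a::{ab_group_add,finite} set"
  assumes d: "d \<in> period X" and p: "p \<in> period C"
  shows "card {k \<in> period X. x + d + p + k \<in> C} = card {k \<in> period X. x + k \<in> C}"
proof -
  have "x + d + p + k \<in> C \<longleftrightarrow> x + (d + k) \<in> C" for k
    using period_memD[OF p, of "x + (d + k)"] by (simp add: add_ac)
  then have "card {k \<in> period X. x + d + p + k \<in> C} = card {k \<in> period X. x + (d + k) \<in> C}"
    by simp
  also have "\<dots> = card ((+) d ` {k \<in> period X. x + (d + k) \<in> C})"
    by (rule card_image[symmetric]) (simp add: inj_on_def)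
  also have "(+) d ` {k \<in> period X. x + (d + k) \<in> C} = {k \<in> period X. x + k \<in> C}"
  proof (intro equalityI subsetI)
    fix k assume k: "k \<in> {k \<in> period X. x + k \<in> C}"
    have "- d + k \<in> {k \<in> period X. x + (d + k) \<in> C}"
      using k period_add[OF period_uminus[OF d]] by simp
    moreover have "k = d + (- d + k)" by simp
    ultimately show "k \<in> (+) d ` {k \<in> period X. x + (d + k) \<in> C}"
      by (rule image_eqI[rotated])
  qed (use period_add[OF d] in auto)
  finally show ?thesis .
qed

text \<open>Two sets are linked if a sum of a period of C1 and a period of C2 carries some point
  of C2 - C1 into C1 - C2.  The union bound is proved separately in the two cases.\<close>
definition linked :: "'a::ab_group_add set \<Rightarrow> 'a set \<Rightarrow> bool" where
  "linked C1 C2 \<longleftrightarrow>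
     (\<exists>x\<in>C2 - C1. \<exists>k1\<in>period C1. \<exists>k2\<in>period C2. x + k1 + k2 \<in> C1 - C2)"

text \<open>Linkedness is symmetric: subtract the two periods again.\<close>
lemma linked_sym: "linked C1 C2 \<Longrightarrow> linked C2 C1"
proof -
  assume "linked C1 C2"
  then obtain x k1 k2 where "x \<in> C2 - C1" "k1 \<in> period C1" "k2 \<in> period C2"
      "x + k1 + k2 \<in> C1 - C2"
    by (auto simp: linked_def)
  moreover have "x = x + k1 + k2 + - k2 + - k1" by simp
  ultimately show "linked C2 C1"
    unfolding linked_def by (metis period_uminus)
qed

text \<open>Union bound, linked case: count the periods of C1 and of C2 at the two linked points.\<close>
lemma union_bound_linked:
  fixes C1 C2 :: "'a::{ab_group_add,finite} set"
  assumes "linked C1 C2"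
  shows "card (period C1) + card (period C2)
           \<le> card (C1 - C2) + card (C2 - C1) + 2 * card (period C1 \<inter> period C2)"
proof -
  from assms obtain x k1 k2 where x: "x \<in> C2 - C1" and k1: "k1 \<in> period C1"
      and k2: "k2 \<in> period C2" and xk: "x + k1 + k2 \<in> C1 - C2"
    by (auto simp: linked_def)
  define y where "y = x + k1 + k2"
  have K1: "card (period C1) = card {k \<in> period C1. x + k \<in> C2} + card {k \<in> period C1. y + k \<notin> C2}"
    using card_split_by_predicate[of "period C1" "\<lambda>k. y + k \<in> C2"]
      card_count_shift[OF k1 k2, of x] by (simp add: y_def)
  have "x = y + - k2 + - k1" by (simp add: y_def)
  then have K2: "card (period C2) = card {k \<in> period C2. y + k \<in> C1} + card {k \<in> period C2. x + k \<notin> C1}"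
    using card_split_by_predicate[of "period C2" "\<lambda>k. x + k \<in> C1"]
      card_count_shift[OF period_uminus[OF k2] period_uminus[OF k1], of y] by simp
  have "card {k \<in> period C1. x + k \<in> C2} + card {k \<in> period C2. x + k \<notin> C1}
          \<le> card (C2 - C1) + card (period C1 \<inter> period C2)"
    using x by (intro point_count) auto
  moreover have "card {k \<in> period C2. y + k \<in> C1} + card {k \<in> period C1. y + k \<notin> C2}
          \<le> card (C1 - C2) + card (period C2 \<inter> period C1)"
    using xk by (intro point_count) (auto simp: y_def)
  ultimately show ?thesis using K1 K2 by (simp add: Int_commute)
qed

text \<open>Union bound, unlinked case: for x \<in> C2 - C1 one of the two period cosets through x
  lies entirely in C2 - C1.\<close>
lemma union_bound_unlinked:
  fixes C1 C2 :: "'a::{ab_group_add,finite} set"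
  assumes x: "x \<in> C2 - C1" and unlinked: "\<not> linked C1 C2"
  shows "card (period C1) \<le> card (C2 - C1) \<or> card (period C2) \<le> card (C2 - C1)"
proof (cases "\<forall>k\<in>period C1. x + k \<in> C2")
  case True
  have "x + k \<in> C2 - C1" if "k \<in> period C1" for k
    using True that x period_memD[OF that, of x] by simp
  then have "x +o period C1 \<subseteq> C2 - C1" by (auto simp: elt_set_plus_def)
  then have "card (period C1) \<le> card (C2 - C1)" by (rule card_le_if_translate_subset) simp
  then show ?thesis ..
next
  case False
  then obtain k where k: "k \<in> period C1" "x + k \<notin> C2" by auto
  have "x + j \<in> C2 - C1" if j: "j \<in> period C2" for j
  proof -
    have "x + j \<notin> C1"
    proof
      assume "x + j \<in> C1"
      then have "x + k + j \<in> C1" using period_memD[OF k(1), of "x + j"] by (simp add: add_ac)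
      moreover have "x + k + j \<notin> C2" using k(2) period_memD[OF j, of "x + k"] by simp
      ultimately show False using unlinked x k(1) j by (auto simp: linked_def)
    qed
    then show ?thesis using x period_memD[OF j, of x] by simp
  qed
  then have "x +o period C2 \<subseteq> C2 - C1" by (auto simp: elt_set_plus_def)
  then have "card (period C2) \<le> card (C2 - C1)" by (rule card_le_if_translate_subset) simp
  then show ?thesis ..
qed

text \<open>With |C1 \<union> C2| = |C1| + |C2 - C1| = |C2| + |C1 - C2| and
  period C1 \<inter> period C2 \<subseteq> period (C1 \<union> C2) this follows from the two cases above.\<close>
lemma union_bound:
  fixes C1 C2 :: "'a::{ab_group_add,finite} set"
  shows "min (card C1 + card (period C1)) (card C2 + card (period C2))
           \<le> card (C1 \<union> C2) + card (period (C1 \<union> C2))"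
proof (cases "C1 \<subseteq> C2 \<or> C2 \<subseteq> C1")
  case True
  then show ?thesis by (auto simp: sup.absorb1 sup.absorb2)
next
  case False
  then obtain x y where x: "x \<in> C2 - C1" and y: "y \<in> C1 - C2" by auto
  have U1: "card (C1 \<union> C2) = card C1 + card (C2 - C1)"
    using card_Un_disjoint[of C1 "C2 - C1"] by (simp add: Un_Diff_cancel)
  have U2: "card (C1 \<union> C2) = card C2 + card (C1 - C2)"
    using card_Un_disjoint[of C2 "C1 - C2"] by (simp add: Un_Diff_cancel Un_commute)
  have M: "card (period C1 \<inter> period C2) \<le> card (period (C1 \<union> C2))"
    by (rule card_mono[OF finite period_Int_subset_period_Un])
  show ?thesis
  proof (cases "linked C1 C2")
    case True
    from union_bound_linked[OF this] show ?thesis using U1 U2 M by linarith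
  next
    case False
    then have "\<not> linked C2 C1" using linked_sym by blast
    with union_bound_unlinked[OF x False] union_bound_unlinked[OF y]
    show ?thesis using U1 U2 M by linarith
  qed
qed

lemma union_family_bound:
  fixes F :: "'b \<Rightarrow> 'a::{ab_group_add,finite} set"
  assumes "finite I" "I \<noteq> {}" "\<And>i. i \<in> I \<Longrightarrow> m \<le> card (F i) + card (period (F i))"
  shows "m \<le> card (\<Union>i\<in>I. F i) + card (period (\<Union>i\<in>I. F i))"
  using assms
proof (induction I rule: finite_ne_induct)
  case (insert i I)
  then have "m \<le> min (card (F i) + card (period (F i)))
                      (card (\<Union>i\<in>I. F i) + card (period (\<Union>i\<in>I. F i)))"
    by simp
  also have "\<dots> \<le> card (F i \<union> (\<Union>i\<in>I. F i)) + card (period (F i \<union> (\<Union>i\<in>I. F i)))"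
    by (rule union_bound)
  finally show ?case by simp
qed simp

section \<open>The weak Kneser theorem\<close>

text \<open>Dyson's e-transform of a pair (A, B): it shrinks the sumset and preserves |A| + |B|.\<close>
definition dyson_left :: "'a::ab_group_add \<Rightarrow> 'a set \<Rightarrow> 'a set \<Rightarrow> 'a set" where
  "dyson_left e A B = A \<union> e +o B"

definition dyson_right :: "'a::ab_group_add \<Rightarrow> 'a set \<Rightarrow> 'a set \<Rightarrow> 'a set" where
  "dyson_right e A B = {b \<in> B. e + b \<in> A}"

lemma dyson_sumset_subset: "dyson_left e A B + dyson_right e A B \<subseteq> A + B"
proof
  fix z assume "z \<in> dyson_left e A B + dyson_right e A B"
  then obtain u v where z: "z = u + v" and u: "u \<in> A \<or> u \<in> e +o B" and v: "v \<in> B" "e + v \<in> A"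
    by (auto elim!: set_plus_elim simp: dyson_left_def dyson_right_def)
  show "z \<in> A + B"
  proof (cases "u \<in> A")
    case False
    then obtain w where "w \<in> B" "u = e + w" using u by (auto simp: elt_set_plus_def)
    then have "z = (e + v) + w" by (simp add: z add_ac)
    with \<open>w \<in> B\<close> v(2) show ?thesis by auto
  qed (use z v in auto)
qed

text \<open>\<dots> and the same total size, since A \<inter> (e +o B) is a translate of dyson_right e A B.\<close>
lemma dyson_card:
  fixes A B :: "'a::ab_group_add set"
  assumes "finite A" "finite B"
  shows "card (dyson_left e A B) + card (dyson_right e A B) = card A + card B"
proof -
  have "A \<inter> (e +o B) = e +o dyson_right e A B"
    by (auto simp: dyson_right_def elt_set_plus_def)
  then have "card (A \<inter> (e +o B)) = card (dyson_right e A B)" by (simp add: card_translate)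
  moreover have "finite (e +o B)" using assms(2) by (simp add: elt_set_plus_image)
  ultimately show ?thesis
    using card_Un_Int[of A "e +o B"] assms by (simp add: dyson_left_def card_translate)
qed

text \<open>A witness a, b, b' of non-degeneracy (a + (b' - b) \<notin> A) gives the transform with
  e = a - b, whose second set still contains b but is strictly smaller than B.\<close>
lemma dyson_right_psubset:
  assumes "a \<in> A" "b \<in> B" "b' \<in> B" "a + (b' - b) \<notin> A"
  shows "b \<in> dyson_right (a - b) A B" "dyson_right (a - b) A B \<subset> B"
proof -
  show "b \<in> dyson_right (a - b) A B" using assms(1,2) by (simp add: dyson_right_def)
  have "a - b + b' = a + (b' - b)" by (simp add: algebra_simps)
  then have "a - b + b' \<notin> A" using assms(4) by metis
  then have "b' \<notin> dyson_right (a - b) A B" by (simp add: dyson_right_def)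
  then show "dyson_right (a - b) A B \<subset> B" using assms(3) by (auto simp: dyson_right_def)
qed

text \<open>Degenerate case of Kneser: A is stable under all differences of elements of B.
  Then A + B is a translate of A and B - b consists of periods of A + B.\<close>
lemma kneser_degenerate:
  fixes A B :: "'a::{ab_group_add,finite} set"
  assumes b: "b \<in> B" and stable: "\<forall>a\<in>A. \<forall>b'\<in>B. a + (b' - b) \<in> A"
  shows "card A + card B \<le> card (A + B) + card (period (A + B))"
proof -
  have periods: "b' - b \<in> period A" if "b' \<in> B" for b'
  proof (rule period_if_translate_subset)
    show "(b' - b) +o A \<subseteq> A"
      using stable that by (auto simp: elt_set_plus_image)
  qed
  have "A + B = A + {b}"
  proof
    show "A + B \<subseteq> A + {b}"
    proof
      fix z assume "z \<in> A + B"
      then obtain a b' where z: "z = a + b'" and "a \<in> A" "b' \<in> B" by (auto elim: set_plus_elim)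
      then have "a + (b' - b) \<in> A" using stable by blast
      moreover have "z = (a + (b' - b)) + b" using z by simp
      ultimately show "z \<in> A + {b}" by (metis set_plus_intro singletonI)
    qed
  qed (simp add: set_plus_mono2 b)
  then have card_sum: "card (A + B) = card A" by (simp add: card_plus_sing)
  have "(- b) +o B \<subseteq> period A"
    using periods by (auto simp: elt_set_plus_image)
  also have "period A \<subseteq> period (A + B)"
    using period_subset_period_plus[of A B] by (simp only: add.commute[of B A])
  finally have "card B \<le> card (period (A + B))" by (rule card_le_if_translate_subset) simp
  with card_sum show ?thesis by simp
qed

text \<open>By induction
  on |B|: in the degenerate case A + B is a translate of A; otherwise every element of A + B
  lies in the sumset of an e-transformed pair with a smaller second set, and the union bound
  assembles these sumsets into A + B.\<close>
theorem kneser_weak: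
  fixes A B :: "'a::{ab_group_add,finite} set"
  assumes "A \<noteq> {}" "B \<noteq> {}"
  shows "card A + card B \<le> card (A + B) + card (period (A + B))"
  using assms
proof (induction "card B" arbitrary: A B rule: less_induct)
  case less
  show ?case
  proof (cases "\<exists>b\<in>B. \<forall>a\<in>A. \<forall>b'\<in>B. a + (b' - b) \<in> A")
    case True
    then show ?thesis using kneser_degenerate by blast
  next
    case nondegenerate: False
    have "\<exists>F. z \<in> F \<and> F \<subseteq> A + B \<and> card A + card B \<le> card F + card (period F)"
      if "z \<in> A + B" for z
    proof -
      from \<open>z \<in> A + B\<close> obtain a0 b where z: "z = a0 + b" "a0 \<in> A" "b \<in> B"
        by (rule set_plus_elim)
      then obtain a b' where ab': "a \<in> A" "b' \<in> B" "a + (b' - b) \<notin> A"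
        using nondegenerate by blast
      let ?A' = "dyson_left (a - b) A B" and ?B' = "dyson_right (a - b) A B"
      note b = dyson_right_psubset(1)[OF ab'(1) z(3) ab'(2,3)]
      have "card ?B' < card B"
        using dyson_right_psubset(2)[OF ab'(1) z(3) ab'(2,3)] by (simp add: psubset_card_mono)
      moreover have "?A' \<noteq> {}" using z by (auto simp: dyson_left_def)
      ultimately have "card ?A' + card ?B' \<le> card (?A' + ?B') + card (period (?A' + ?B'))"
        using less.hyps b by blast
      then have "card A + card B \<le> card (?A' + ?B') + card (period (?A' + ?B'))"
        by (simp add: dyson_card)
      moreover have "z \<in> ?A' + ?B'" using z b by (auto simp: dyson_left_def)
      ultimately show ?thesis using dyson_sumset_subset by blast
    qed
    then obtain F where F: "\<And>z. z \<in> A + B \<Longrightarrow>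
        z \<in> F z \<and> F z \<subseteq> A + B \<and> card A + card B \<le> card (F z) + card (period (F z))"
      by metis
    then have cover: "A + B = (\<Union>z\<in>A + B. F z)" by blast
    have "A + B \<noteq> {}" using less.prems by (auto simp: set_plus_def)
    then have "card A + card B \<le> card (\<Union>z\<in>A + B. F z) + card (period (\<Union>z\<in>A + B. F z))"
      using F by (intro union_family_bound) auto
    then show ?thesis by (simp only: cover[symmetric])
  qed
qed

lemma sumset_Suc_plus: "sumset (Suc r) A = zero_ext A + sumset r A"
  by (auto simp: set_plus_def)

declare sumset.simps(2) [simp del]

lemma zero_in_sumset: "0 \<in> sumset r A"
proof (induction r)
  case (Suc r)
  then have "0 + 0 \<in> zero_ext A + sumset r A" by (intro set_plus_intro) (auto simp: zero_ext_def)
  then show ?case by (simp only: sumset_Suc_plus add_0)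
qed simp

lemma sumset_insert_zero: "sumset r (insert 0 A) = sumset r A"
  by (induction r) (simp_all add: sumset_Suc_plus zero_ext_def)

lemma period_sumset_mono: "j \<le> k \<Longrightarrow> period (sumset j A) \<subseteq> period (sumset k A)"
proof (induction k rule: dec_induct)
  case (step k)
  have "period (sumset k A) \<subseteq> period (sumset (Suc k) A)"
    unfolding sumset_Suc_plus by (rule period_subset_period_plus)
  with step.IH show ?case by blast
qed simp

lemma sumset_translate_union:
  assumes H0: "0 \<in> H" and H_closed: "H + H \<subseteq> H" and g: "g \<in> H"
  shows "sumset r (A \<union> g +o A) \<subseteq> sumset r A + H"
proof (induction r)
  case 0
  show ?case using H0 by simp
next
  case (Suc r)
  have "zero_ext (A \<union> g +o A) \<subseteq> zero_ext A + H"
  proof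
    fix x assume "x \<in> zero_ext (A \<union> g +o A)"
    then consider "x \<in> zero_ext A" | a where "a \<in> A" "x = a + g"
      by (auto simp: zero_ext_def elt_set_plus_image)
    then show "x \<in> zero_ext A + H"
    proof cases
      case 1
      then show ?thesis using set_plus_intro[OF 1 H0] by simp
    next
      case 2
      then show ?thesis using set_plus_intro[OF _ g, of a "zero_ext A"] by (simp add: zero_ext_def)
    qed
  qed
  then have "sumset (Suc r) (A \<union> g +o A) \<subseteq> (zero_ext A + H) + (sumset r A + H)"
    unfolding sumset_Suc_plus using Suc.IH by (rule set_plus_mono2)
  also have "\<dots> = sumset (Suc r) A + (H + H)"
    by (simp only: sumset_Suc_plus add_ac)
  also have "\<dots> \<subseteq> sumset (Suc r) A + H"
    using H_closed by (rule set_plus_mono2[OF order_refl])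
  finally show ?case .
qed

section \<open>Aperiodic rho-maximal sets\<close>

text \<open>A rho-maximal set contains 0, since adjoining 0 does not change any sumset.\<close>
lemma rho_maximal_zero_mem:
  assumes "rho_maximal \<rho> A"
  shows "0 \<in> A"
proof (rule ccontr)
  assume "0 \<notin> A"
  then have "A \<subset> insert 0 A" by auto
  then have "sumset (\<rho> - 1) (insert 0 A) = UNIV" using assms by (simp add: rho_maximal_def)
  then show False using assms by (simp add: rho_maximal_def sumset_insert_zero)
qed

text \<open>For an aperiodic rho-maximal A the sumset (rho - 1)A is aperiodic: a period g of it
  could be used to enlarge A to A \<union> (g + A) without making the sumset equal to G.\<close>
lemma rho_maximal_sumset_aperiodic:
  fixes A :: "'a::{ab_group_add,finite} set"
  assumes ap: "aperiodic A" and mx: "rho_maximal \<rho> A"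
  shows "period (sumset (\<rho> - 1) A) = {0}"
proof
  let ?S = "sumset (\<rho> - 1) A"
  show "period ?S \<subseteq> {0}"
  proof
    fix g assume g: "g \<in> period ?S"
    have "period ?S + period ?S \<subseteq> period ?S"
      by (auto elim!: set_plus_elim intro: period_add)
    then have "sumset (\<rho> - 1) (A \<union> g +o A) \<subseteq> ?S + period ?S"
      using g by (intro sumset_translate_union period_zero)
    also have "\<dots> \<subseteq> ?S" by (rule plus_period_subset)
    finally have "sumset (\<rho> - 1) (A \<union> g +o A) \<noteq> UNIV"
      using mx by (auto simp: rho_maximal_def)
    then have "\<not> A \<subset> A \<union> g +o A" using mx by (auto simp: rho_maximal_def)
    then have "g +o A \<subseteq> A" by blast
    then have "g \<in> period A" by (rule period_if_translate_subset)
    then show "g \<in> {0}" using ap by (simp add: aperiodic_def)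
  qed
qed (simp add: period_zero)

text \<open>Growth of iterated sumsets below an aperiodic one, from the weak Kneser theorem.\<close>
lemma sumset_growth:
  fixes A :: "'a::{ab_group_add,finite} set"
  assumes zero: "0 \<in> A" and aperiodic: "period (sumset k A) = {0}" and "j \<le> k"
  shows "j * (card A - 1) + 1 \<le> card (sumset j A)"
  using \<open>j \<le> k\<close>
proof (induction j)
  case (Suc j)
  have step: "sumset (Suc j) A = A + sumset j A"
    using zero by (simp only: sumset_Suc_plus zero_ext_def insert_absorb)
  have "period (sumset (Suc j) A) = {0}"
    using period_sumset_mono[OF Suc.prems, of A] aperiodic period_zero by blast
  moreover have "card A + card (sumset j A)
      \<le> card (A + sumset j A) + card (period (A + sumset j A))"
    using zero zero_in_sumset by (intro kneser_weak) auto
  ultimately have "card A + card (sumset j A) \<le> card (sumset (Suc j) A) + 1"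
    by (simp add: step)
  moreover have "j * (card A - 1) + 1 \<le> card (sumset j A)" using Suc by simp
  moreover have "card A \<ge> 1" using zero by (auto simp: Suc_le_eq card_gt_0_iff)
  ultimately show ?case by (simp add: algebra_simps)
qed simp

text \<open>An element t outside (r+1)A shows that A and t - rA are disjoint subsets of G.\<close>
lemma card_plus_card_sumset_le:
  fixes A :: "'a::{ab_group_add,finite} set"
  assumes t: "t \<notin> sumset (Suc r) A"
  shows "card A + card (sumset r A) \<le> card (UNIV :: 'a set)"
proof -
  let ?T = "(\<lambda>s. t - s) ` sumset r A"
  have "A \<inter> ?T = {}"
  proof (rule ccontr)
    assume "A \<inter> ?T \<noteq> {}"
    then obtain s where "t - s \<in> A" "s \<in> sumset r A" by auto
    then have "(t - s) + s \<in> zero_ext A + sumset r A"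
      by (intro set_plus_intro) (simp_all add: zero_ext_def)
    then show False using t by (simp add: sumset_Suc_plus)
  qed
  moreover have "card ?T = card (sumset r A)" by (rule card_image) (auto simp: inj_on_def)
  ultimately have "card A + card (sumset r A) = card (A \<union> ?T)" by (simp add: card_Un_disjoint)
  also have "\<dots> \<le> card (UNIV :: 'a set)" by (rule card_mono) auto
  finally show ?thesis .
qed

lemma rho_maximal_card_bound:
  fixes A :: "'a::{ab_group_add,finite} set"
  assumes ap: "aperiodic A" and mx: "rho_maximal \<rho> A" and "\<rho> \<ge> 2"
  shows "(\<rho> - 1) * (card A - 1) + 2 \<le> card (UNIV :: 'a set)"
proof -
  define r where "r = \<rho> - 2"
  have r: "\<rho> - 1 = Suc r" using \<open>\<rho> \<ge> 2\<close> by (simp add: r_def)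
  obtain t where "t \<notin> sumset (Suc r) A" using mx r by (auto simp: rho_maximal_def)
  then have "card A + card (sumset r A) \<le> card (UNIV :: 'a set)" by (rule card_plus_card_sumset_le)
  moreover have "r * (card A - 1) + 1 \<le> card (sumset r A)"
    using rho_maximal_zero_mem[OF mx] rho_maximal_sumset_aperiodic[OF ap mx, unfolded r]
    by (rule sumset_growth) simp
  moreover have "card A \<ge> 1" using rho_maximal_zero_mem[OF mx] by (auto simp: Suc_le_eq card_gt_0_iff)
  moreover have "Suc r * (card A - 1) = r * (card A - 1) + (card A - 1)" by simp
  ultimately show ?thesis unfolding r by linarith
qed

text \<open>Translating (rho - 1)(m - 1) + 2 \<le> n into the floor expression of the theorem; the
  value m = 0 (coming from the convention max {} = 0) satisfies the bound as well.\<close>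
lemma floor_bound:
  fixes n m \<rho> :: nat
  assumes "\<rho> \<ge> 2" and "n \<ge> 1" and "m = 0 \<or> (\<rho> - 1) * (m - 1) + 2 \<le> n"
  shows "int m \<le> \<lfloor>(real n - 2) / (real \<rho> - 1)\<rfloor> + 1"
proof -
  have pos: "real \<rho> - 1 > 0" using \<open>\<rho> \<ge> 2\<close> by simp
  have "(real m - 1) * (real \<rho> - 1) \<le> real n - 2"
  proof (cases "m = 0")
    case True
    then show ?thesis using assms(1,2) by simp
  next
    case False
    obtain p q where pq: "\<rho> = Suc p" "m = Suc q"
      using \<open>\<rho> \<ge> 2\<close> False by (metis not0_implies_Suc not_numeral_le_zero)
    then have "p * q + 2 \<le> n" using assms(3) False by simp
    then have "real p * real q + 2 \<le> real n"
      by (metis of_nat_add of_nat_mult of_nat_le_iff of_nat_numeral)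
    then show ?thesis using pq by (simp add: mult.commute)
  qed
  then have "real m - 1 \<le> (real n - 2) / (real \<rho> - 1)" using pos by (simp add: pos_le_divide_eq)
  then have "int m - 1 \<le> \<lfloor>(real n - 2) / (real \<rho> - 1)\<rfloor>" by (simp add: le_floor_iff)
  then show ?thesis by simp
qed

theorem proposition2p8:
  fixes \<rho> :: nat
  assumes "\<rho> \<ge> 2"
  shows "int (t_rho \<rho> TYPE('a::{ab_group_add,finite}))
           \<le> floor ((real (card (UNIV :: 'a set)) - 2) / (real \<rho> - 1)) + 1"
proof -
  let ?S = "{A :: 'a set. aperiodic A \<and> rho_maximal \<rho> A \<and> generating A}"
  have "t_rho \<rho> TYPE('a) \<in> insert 0 (card ` ?S)"
    unfolding t_rho_def by (rule Max_in) simp_all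
  then have "t_rho \<rho> TYPE('a) = 0 \<or>
      (\<rho> - 1) * (t_rho \<rho> TYPE('a) - 1) + 2 \<le> card (UNIV :: 'a set)"
    using rho_maximal_card_bound[where 'a = 'a, OF _ _ assms] by auto
  moreover have "card (UNIV :: 'a set) \<ge> 1" by (simp add: Suc_le_eq card_gt_0_iff)
  ultimately show ?thesis using floor_bound[OF assms] by blast
qed

end
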